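(* Let $X$ be a compact metric space, let $f:X\to X$ be continuous and let $x\in X$. If $\omega_f(x)$ is totally periodic, then $\omega_f(x)$ has finitely many connected components, and these components form a periodic cycle: they can be listed as $C_0,\dots,C_{k-1}$ with $f(C_0)=C_1, f(C_1)=C_2,\dots,f(C_{k-2})=C_{k-1}, f(C_{k-1})=C_0$.
   Context: For $x\in X$, the $\omega$-limit set is $\omega_f(x)=\{y\in X:\ \exists\, n_i\in\mathbb{N},\ n_i\to+\infty,\ \lim_{i\to\infty} d(f^{n_i}(x),y)=0\}$. A point $y$ is periodic if $f^n(y)=y$ for some $n\ge1$; $P(f)$ denotes the set of periodic points. The set $\omega_f(x)$ is called totally periodic if $\omega_f(x)\subset P(f)$. *)

theory Defs
  imports "HOL-Analysis.Analysis"
begin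

definition omega_limit :: "('a::metric_space \<Rightarrow> 'a) \<Rightarrow> 'a \<Rightarrow> 'a set" where
  "omega_limit f x = {y. \<exists>n::nat \<Rightarrow> nat. filterlim n at_top sequentially \<and>
                          ((\<lambda>i. (f ^^ n i) x) \<longlongrightarrow> y) sequentially}"

definition periodic_points :: "'a set \<Rightarrow> ('a \<Rightarrow> 'a) \<Rightarrow> 'a set" where
  "periodic_points X f = {y \<in> X. \<exists>n\<ge>1. (f ^^ n) y = y}"

end

theory Submission
  imports Defs "HOL-Combinatorics.Orbits"
begin

text \<open>
  The omega-limit set \<open>W\<close> is compact and \<open>f\<close>-invariant, and it has no proper nonempty
  clopen subset \<open>A\<close> with \<open>f ` A \<subseteq> A\<close>: an orbit that comes close to \<open>A\<close> is trapped
  near \<open>A\<close> forever and cannot return near \<open>W - A\<close>.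
  Since every point of \<open>W\<close> is periodic, \<open>f\<close> maps components of \<open>W\<close> onto components,
  distinct ones to distinct ones, and hence clopen sets to clopen sets. A Baire-type descent
  through clopen sets yields \<open>N \<ge> 1\<close> and a nonempty clopen \<open>V\<close> on which \<open>f ^^ N\<close>
  preserves every component; the union of the first \<open>N\<close> images of \<open>V\<close> is an invariant
  clopen set, hence all of \<open>W\<close>, so \<open>f ^^ N\<close> preserves every component of \<open>W\<close>.
  In a compact space points in different components are separated by clopen sets, and one
  more appeal to minimality shows that every component is that of some \<open>(f ^^ i) y0\<close> with
  \<open>i < N\<close>. So the components form a single finite cycle under \<open>f\<close>.
\<close>

lemma funpow_in_invariant_set:
  assumes "f ` X \<subseteq> X" "x \<in> X"
  shows "(f ^^ n) x \<in> X"
  using assms by (induction n) auto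

lemma funpow_pred_apply:
  assumes "(f ^^ n) x = x" "n \<ge> 1"
  shows "(f ^^ (n - 1)) (f x) = x"
  using assms by (cases n) (simp_all add: funpow_swap1)

lemma compact_Int_Inter_nest:
  assumes "compact K" "\<And>n::nat. closed (F n)" "\<And>m n. m \<le> n \<Longrightarrow> F n \<subseteq> F m"
    and "\<And>n. K \<inter> F n \<noteq> {}"
  shows "K \<inter> (\<Inter>n. F n) \<noteq> {}"
proof (rule compact_imp_fip_image[OF assms(1,2)])
  fix I :: "nat set" assume "finite I"
  then have "F (Max I) \<subseteq> (\<Inter>i\<in>I. F i)"
    using assms(3) Max_ge by (meson INT_greatest)
  then show "K \<inter> (\<Inter>i\<in>I. F i) \<noteq> {}"
    using assms(4)[of "Max I"] by blast
qed

section \<open>Clopen subsets and components\<close>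

definition clopenin :: "'a topology \<Rightarrow> 'a set \<Rightarrow> bool" where
  "clopenin X U \<longleftrightarrow> closedin X U \<and> openin X U"

lemma clopenin_imp_subset: "clopenin X U \<Longrightarrow> U \<subseteq> topspace X"
  by (simp add: clopenin_def closedin_subset)

lemma clopenin_topspace: "clopenin X (topspace X)"
  by (simp add: clopenin_def)

lemma clopenin_diff: "clopenin X U \<Longrightarrow> clopenin X (topspace X - U)"
  by (simp add: clopenin_def closedin_diff openin_diff)

lemma clopenin_Int: "clopenin X U \<Longrightarrow> clopenin X V \<Longrightarrow> clopenin X (U \<inter> V)"
  by (simp add: clopenin_def closedin_Int openin_Int)

lemma clopenin_INT:
  "finite I \<Longrightarrow> I \<noteq> {} \<Longrightarrow> (\<And>i. i \<in> I \<Longrightarrow> clopenin X (U i)) \<Longrightarrow> clopenin X (\<Inter>i\<in>I. U i)"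
  unfolding clopenin_def by (intro conjI closedin_INT openin_INT2) auto

lemma clopenin_UN:
  "finite I \<Longrightarrow> (\<And>i. i \<in> I \<Longrightarrow> clopenin X (U i)) \<Longrightarrow> clopenin X (\<Union>i\<in>I. U i)"
  unfolding clopenin_def by (intro conjI closedin_Union openin_Union) auto

lemma connected_component_subset_clopenin:
  assumes "clopenin (top_of_set S) U" "y \<in> U"
  shows "connected_component_set S y \<subseteq> U"
proof -
  have "U \<subseteq> S"
    using clopenin_imp_subset[OF assms(1)] by simp
  then have "connectedin (top_of_set S) (connected_component_set S y)"
    by (simp add: connectedin_subtopology connected_component_subset)
  moreover have "y \<in> connected_component_set S y"
    using assms(2) \<open>U \<subseteq> S\<close> by auto
  ultimately show ?thesis
    using connectedin_clopen_cases assms(1,2) unfolding clopenin_def disjnt_iff by blast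
qed

lemma clopenin_separates_components:
  fixes S :: "'a::metric_space set"
  assumes "compact S" "y \<in> S" "w \<in> S" "w \<notin> connected_component_set S y"
  shows "\<exists>U. clopenin (top_of_set S) U \<and> y \<in> U \<and> w \<notin> U"
proof -
  have "quasi_component_of (top_of_set S) y = connected_component_of (top_of_set S) y"
    using assms(1) by (intro quasi_eq_connected_component_of)
      (simp add: compact_space_subtopology Hausdorff_space_subtopology)
  moreover have "\<not> connected_component_of (top_of_set S) y w"
    using assms(4) connected_componentI
    by (auto simp: connected_component_of_def connectedin_subtopology)
  ultimately have "\<not> quasi_component_of (top_of_set S) y w"
    by metis
  then show ?thesis
    using assms(2,3) unfolding quasi_component_of clopenin_def by auto
qed

lemma compact_clopenin_Baire:
  fixes S :: "'a::metric_space set" and R :: "nat \<Rightarrow> 'a set"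
  assumes "compact S" "S \<subseteq> (\<Union>n. R n)"
    and shrink: "\<And>n U. clopenin (top_of_set S) U \<Longrightarrow> U \<noteq> {} \<Longrightarrow>
      \<exists>U'. clopenin (top_of_set S) U' \<and> U' \<noteq> {} \<and> U' \<subseteq> U \<and> U' \<inter> R n = {}"
  shows "S = {}"
proof (rule ccontr)
  assume "S \<noteq> {}"
  define next_set where "next_set n U =
    (SOME U'. clopenin (top_of_set S) U' \<and> U' \<noteq> {} \<and> U' \<subseteq> U \<and> U' \<inter> R n = {})" for n :: nat and U
  define T where "T = rec_nat S next_set"
  have step: "clopenin (top_of_set S) (T (Suc n)) \<and> T (Suc n) \<noteq> {}
      \<and> T (Suc n) \<subseteq> T n \<and> T (Suc n) \<inter> R n = {}"
    if "clopenin (top_of_set S) (T n)" "T n \<noteq> {}" for n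
    using someI_ex[OF shrink[OF that]] by (simp add: T_def next_set_def)
  have T_clopen: "clopenin (top_of_set S) (T n) \<and> T n \<noteq> {}" for n
  proof (induction n)
    case 0
    show ?case
      using clopenin_topspace[of "top_of_set S"] \<open>S \<noteq> {}\<close> by (simp add: T_def)
  qed (use step in blast)
  have T: "clopenin (top_of_set S) (T n) \<and> T n \<noteq> {}
      \<and> T (Suc n) \<subseteq> T n \<and> T (Suc n) \<inter> R n = {}" for n
    using step T_clopen by blast
  have "S \<inter> (\<Inter>n. T n) \<noteq> {}"
  proof (rule compact_Int_Inter_nest[OF assms(1)])
    show "closed (T n)" for n
      using T[of n] closedin_closed_trans compact_imp_closed[OF assms(1)]
      unfolding clopenin_def by blast
    show "T n \<subseteq> T m" if "m \<le> n" for m n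
      using that by (induction n rule: dec_induct) (use T in blast)+
    show "S \<inter> T n \<noteq> {}" for n
      using T[of n] clopenin_imp_subset[of "top_of_set S" "T n"] by auto
  qed
  then obtain y where "y \<in> S" and y_in_T: "\<And>m. y \<in> T m"
    by blast
  then obtain n where "y \<in> R n"
    using assms(2) by blast
  then show False
    using T[of n] y_in_T[of "Suc n"] by blast
qed

section \<open>Omega-limit sets\<close>

definition orbit_from :: "('a \<Rightarrow> 'a) \<Rightarrow> 'a \<Rightarrow> nat \<Rightarrow> 'a set" where
  "orbit_from f x M = (\<lambda>m. (f ^^ m) x) ` {M..}"

lemma funpow_in_orbit_from: "m \<ge> M \<Longrightarrow> (f ^^ m) x \<in> orbit_from f x M"
  by (simp add: orbit_from_def)

lemma orbit_from_antimono: "M \<le> N \<Longrightarrow> orbit_from f x N \<subseteq> orbit_from f x M"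
  by (auto simp: orbit_from_def)

lemma orbit_from_subset: "f ` X \<subseteq> X \<Longrightarrow> x \<in> X \<Longrightarrow> orbit_from f x M \<subseteq> X"
  by (auto simp: orbit_from_def intro: funpow_in_invariant_set)

lemma image_orbit_from_subset: "f ` orbit_from f x M \<subseteq> orbit_from f x M"
proof
  fix z assume "z \<in> f ` orbit_from f x M"
  then obtain m where "m \<ge> M" "z = (f ^^ Suc m) x"
    by (auto simp: orbit_from_def)
  then show "z \<in> orbit_from f x M"
    by (simp add: funpow_in_orbit_from del: funpow.simps)
qed

lemma omega_limit_eq_Inter_closure:
  "omega_limit f x = (\<Inter>M. closure (orbit_from f x M))"
proof (intro equalityI subsetI)
  fix y assume "y \<in> omega_limit f x"
  then obtain n :: "nat \<Rightarrow> nat" where n: "filterlim n at_top sequentially"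
    and lim: "((\<lambda>i. (f ^^ n i) x) \<longlongrightarrow> y) sequentially"
    unfolding omega_limit_def by blast
  show "y \<in> (\<Inter>M. closure (orbit_from f x M))"
  proof
    fix M
    have "eventually (\<lambda>i. n i \<ge> M) sequentially"
      using n by (simp add: filterlim_at_top)
    then have "eventually (\<lambda>i. (f ^^ n i) x \<in> closure (orbit_from f x M)) sequentially"
      by (rule eventually_mono) (intro closure_subset[THEN subsetD] funpow_in_orbit_from)
    then show "y \<in> closure (orbit_from f x M)"
      using Lim_in_closed_set[OF closed_closure _ trivial_limit_sequentially lim] by blast
  qed
next
  fix y assume y: "y \<in> (\<Inter>M. closure (orbit_from f x M))"
  have "\<exists>m\<ge>i. dist ((f ^^ m) x) y < inverse (Suc i)" for i
  proof -
    have "y \<in> closure (orbit_from f x i)"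
      using y by blast
    then obtain z where "z \<in> orbit_from f x i" "dist z y < inverse (Suc i)"
      unfolding closure_approachable by (meson inverse_positive_iff_positive of_nat_0_less_iff zero_less_Suc)
    then show ?thesis
      by (auto simp: orbit_from_def)
  qed
  then obtain n where n: "\<And>i. n i \<ge> i" "\<And>i. dist ((f ^^ n i) x) y < inverse (Suc i)"
    by metis
  have "filterlim n at_top sequentially"
    by (rule filterlim_at_top_mono[OF filterlim_ident]) (use n(1) in auto)
  moreover have "((\<lambda>i. (f ^^ n i) x) \<longlongrightarrow> y) sequentially"
  proof (rule tendsto_dist_iff[THEN iffD2], rule tendsto_sandwich[OF _ _ tendsto_const LIMSEQ_inverse_real_of_nat])
    show "eventually (\<lambda>i. 0 \<le> dist ((f ^^ n i) x) y) sequentially"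
      by simp
    show "eventually (\<lambda>i. dist ((f ^^ n i) x) y \<le> inverse (Suc i)) sequentially"
      using n(2) by (intro always_eventually allI less_imp_le)
  qed
  ultimately show "y \<in> omega_limit f x"
    unfolding omega_limit_def by blast
qed

lemma closed_omega_limit: "closed (omega_limit f x)"
  unfolding omega_limit_eq_Inter_closure by blast

lemma omega_limit_subset:
  assumes "closed X" "f ` X \<subseteq> X" "x \<in> X"
  shows "omega_limit f x \<subseteq> X"
  using closure_minimal[OF orbit_from_subset[OF assms(2,3)] assms(1)]
  unfolding omega_limit_eq_Inter_closure by blast

lemma compact_omega_limit:
  assumes "compact X" "f ` X \<subseteq> X" "x \<in> X"
  shows "compact (omega_limit f x)"
proof -
  have "omega_limit f x = X \<inter> omega_limit f x"
    using omega_limit_subset[OF compact_imp_closed[OF assms(1)] assms(2,3)] by blast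
  then show ?thesis
    using compact_Int_closed[OF assms(1) closed_omega_limit] by metis
qed

lemma omega_limit_nonempty:
  assumes "compact X" "f ` X \<subseteq> X" "x \<in> X"
  shows "omega_limit f x \<noteq> {}"
proof -
  have "X \<inter> (\<Inter>M. closure (orbit_from f x M)) \<noteq> {}"
  proof (rule compact_Int_Inter_nest[OF assms(1) closed_closure])
    show "closure (orbit_from f x N) \<subseteq> closure (orbit_from f x M)" if "M \<le> N" for M N
      using closure_mono[OF orbit_from_antimono[OF that]] .
    show "X \<inter> closure (orbit_from f x M) \<noteq> {}" for M
    proof -
      have "(f ^^ M) x \<in> X \<inter> closure (orbit_from f x M)"
        using funpow_in_invariant_set[OF assms(2,3)] funpow_in_orbit_from[of M M f x]
          closure_subset[of "orbit_from f x M"] by blast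
      then show ?thesis
        by blast
    qed
  qed
  then show ?thesis
    unfolding omega_limit_eq_Inter_closure by blast
qed

lemma omega_limit_frequently_in_open:
  assumes "y \<in> omega_limit f x" "open G" "y \<in> G"
  shows "\<exists>m\<ge>M. (f ^^ m) x \<in> G"
proof -
  have "y \<in> closure (orbit_from f x M)"
    using assms(1) unfolding omega_limit_eq_Inter_closure by blast
  then have "G \<inter> orbit_from f x M \<noteq> {}"
    using assms(2,3) open_Int_closure_eq_empty by blast
  then show ?thesis
    by (auto simp: orbit_from_def)
qed

lemma eventually_notin_compact_disjoint_omega_limit:
  assumes "compact K" "K \<inter> omega_limit f x = {}"
  shows "\<exists>M. \<forall>m\<ge>M. (f ^^ m) x \<notin> K"
proof (rule ccontr)
  assume not_eventually: "\<not> ?thesis"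
  have "K \<inter> (\<Inter>M. closure (orbit_from f x M)) \<noteq> {}"
  proof (rule compact_Int_Inter_nest[OF assms(1) closed_closure])
    show "closure (orbit_from f x N) \<subseteq> closure (orbit_from f x M)" if "M \<le> N" for M N
      using closure_mono[OF orbit_from_antimono[OF that]] .
    show "K \<inter> closure (orbit_from f x M) \<noteq> {}" for M
    proof -
      obtain m where "m \<ge> M" "(f ^^ m) x \<in> K"
        using not_eventually by blast
      then show ?thesis
        using funpow_in_orbit_from[of M m f x] closure_subset[of "orbit_from f x M"] by blast
    qed
  qed
  then show False
    using assms(2) unfolding omega_limit_eq_Inter_closure by blast
qed

lemma image_omega_limit_subset:
  assumes "closed X" "continuous_on X f" "f ` X \<subseteq> X" "x \<in> X"
  shows "f ` omega_limit f x \<subseteq> omega_limit f x"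
proof -
  have "f ` closure (orbit_from f x M) \<subseteq> closure (orbit_from f x M)" for M
  proof (rule image_closure_subset)
    show "continuous_on (closure (orbit_from f x M)) f"
      using continuous_on_subset[OF assms(2) closure_minimal[OF orbit_from_subset[OF assms(3,4)] assms(1)]] .
    show "f ` orbit_from f x M \<subseteq> closure (orbit_from f x M)"
      using image_orbit_from_subset closure_subset by (rule order_trans)
  qed simp
  then show ?thesis
    unfolding omega_limit_eq_Inter_closure by blast
qed

lemma omega_limit_trapping_region:
  fixes f :: "'a::metric_space \<Rightarrow> 'a"
  assumes X: "compact X" "f ` X \<subseteq> X" "x \<in> X"
    and "open U" "open V" "U \<inter> V = {}" "f ` (U \<inter> X) \<inter> V = {}"
    and "omega_limit f x \<subseteq> U \<union> V" "omega_limit f x \<inter> U \<noteq> {}"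
  shows "omega_limit f x \<inter> V = {}"
proof (rule ccontr)
  assume "omega_limit f x \<inter> V \<noteq> {}"
  \<comment> \<open>The orbit eventually stays in \<open>U \<union> V\<close>, and once in \<open>U\<close> it can never jump to \<open>V\<close>.\<close>
  have "compact (X - (U \<union> V))"
    using X(1) assms(4,5) by (intro compact_diff) auto
  moreover have "(X - (U \<union> V)) \<inter> omega_limit f x = {}"
    using assms(8) by blast
  ultimately obtain M where M0: "\<forall>m\<ge>M. (f ^^ m) x \<notin> X - (U \<union> V)"
    using eventually_notin_compact_disjoint_omega_limit by blast
  have M: "(f ^^ m) x \<in> U \<union> V" if "m \<ge> M" for m
    using M0 that funpow_in_invariant_set[OF X(2,3), of m] by blast
  obtain a where "a \<in> omega_limit f x" "a \<in> U"
    using assms(9) by blast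
  then obtain m0 where m0: "m0 \<ge> M" "(f ^^ m0) x \<in> U"
    using omega_limit_frequently_in_open[of a f x U M] assms(4) by blast
  have trapped: "(f ^^ m) x \<in> U" if "m \<ge> m0" for m
    using that
  proof (induction m rule: dec_induct)
    case (step m)
    then have "f ((f ^^ m) x) \<notin> V"
      using assms(7) funpow_in_invariant_set[OF X(2,3), of m] by blast
    then show ?case
      using M[of "Suc m"] step(1) m0(1) by auto
  qed (rule m0(2))
  obtain b where "b \<in> omega_limit f x" "b \<in> V"
    using \<open>omega_limit f x \<inter> V \<noteq> {}\<close> by blast
  then obtain m where "m \<ge> m0" "(f ^^ m) x \<in> V"
    using omega_limit_frequently_in_open[of b f x V m0] assms(5) by blast
  then show False
    using trapped assms(6) by blast
qed

lemma invariant_clopenin_omega_limit_eq: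
  fixes f :: "'a::metric_space \<Rightarrow> 'a"
  assumes X: "compact X" "continuous_on X f" "f ` X \<subseteq> X" "x \<in> X"
    and A: "clopenin (top_of_set (omega_limit f x)) A" "A \<noteq> {}" "f ` A \<subseteq> A"
  shows "A = omega_limit f x"
proof (rule ccontr)
  let ?W = "omega_limit f x"
  assume "A \<noteq> ?W"
  define B where "B = ?W - A"
  have "A \<subseteq> ?W" "B \<subseteq> ?W" "B \<noteq> {}"
    using clopenin_imp_subset[OF A(1)] \<open>A \<noteq> ?W\<close> unfolding B_def by auto
  have "clopenin (top_of_set ?W) B"
    using clopenin_diff[OF A(1)] unfolding B_def by simp
  then have "closed A" "closed B"
    using A(1) closed_omega_limit closedin_closed_trans unfolding clopenin_def by blast+
  then obtain GA GB where G: "open GA" "open GB" "A \<subseteq> GA" "B \<subseteq> GB" "GA \<inter> GB = {}"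
    using t4_space[of A B] B_def by blast
  obtain H where H: "open H" "H \<inter> X = f -` GA \<inter> X"
    using X(2) G(1) unfolding continuous_on_open_invariant by metis
  have "?W \<subseteq> X"
    using X omega_limit_subset compact_imp_closed by blast
  then have "A \<subseteq> H \<inter> GA"
    using H(2) G(3) A(3) \<open>A \<subseteq> ?W\<close> by blast
  then have "?W \<inter> GB = {}"
    using H G \<open>A \<subseteq> ?W\<close> A(2) unfolding B_def
    by (intro omega_limit_trapping_region[OF X(1,3,4), of "H \<inter> GA"]) blast+
  then show False
    using G(4) \<open>B \<subseteq> ?W\<close> \<open>B \<noteq> {}\<close> by blast
qed

section \<open>Compact systems in which every point is periodic\<close>

locale periodic_compact_system =
  fixes S :: "'a::metric_space set" and f :: "'a \<Rightarrow> 'a"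
  assumes compact_S: "compact S" and continuous_on_f: "continuous_on S f"
    and image_subset: "f ` S \<subseteq> S"
    and periodic: "\<And>y. y \<in> S \<Longrightarrow> \<exists>n\<ge>1. (f ^^ n) y = y"
begin

lemma funpow_in: "y \<in> S \<Longrightarrow> (f ^^ n) y \<in> S"
  using funpow_in_invariant_set[OF image_subset] .

lemma continuous_on_funpow: "continuous_on S (f ^^ n)"
proof (induction n)
  case (Suc n)
  then show ?case
    using continuous_on_compose[OF Suc continuous_on_subset[OF continuous_on_f]] funpow_in
    by (auto simp: image_subset_iff)
qed simp

lemma image_eq: "f ` S = S"
proof
  show "S \<subseteq> f ` S"
  proof
    fix z assume "z \<in> S"
    then obtain r where "r \<ge> 1" "(f ^^ r) z = z"
      using periodic by blast
    then have "f ((f ^^ (r - 1)) z) = z"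
      using funpow_pred_apply[where f = f and n = r and x = z] by (simp add: funpow_swap1)
    then show "z \<in> f ` S"
      using funpow_in[OF \<open>z \<in> S\<close>, of "r - 1"] by (metis image_eqI)
  qed
qed (rule image_subset)

lemma image_funpow_connected_component_subset:
  assumes "y \<in> S"
  shows "(f ^^ n) ` connected_component_set S y \<subseteq> connected_component_set S ((f ^^ n) y)"
proof (rule connected_component_maximal)
  show "connected ((f ^^ n) ` connected_component_set S y)"
    using continuous_on_subset[OF continuous_on_funpow connected_component_subset]
    by (intro connected_continuous_image) auto
  show "(f ^^ n) ` connected_component_set S y \<subseteq> S"
    using funpow_in connected_component_subset by blast
qed (use assms in simp)

lemma connected_component_eq_if_image_eq:
  assumes "a \<in> S" "b \<in> S"
    and "connected_component_set S (f a) = connected_component_set S (f b)"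
  shows "connected_component_set S a = connected_component_set S b"
proof -
  obtain p q where "p \<ge> 1" "(f ^^ p) a = a" "q \<ge> 1" "(f ^^ q) b = b"
    using periodic assms(1,2) by metis
  then have period: "(f ^^ (p * q)) a = a" "(f ^^ (p * q)) b = b"
    using funpow_mod_eq[where f = f and n = p and x = a and m = "p * q"]
      funpow_mod_eq[where f = f and n = q and x = b and m = "p * q"] by simp_all
  \<comment> \<open>\<open>f ^^ (p * q - 1)\<close> undoes \<open>f\<close> on both points and maps components into components\<close>
  have "p * q \<ge> 1"
    using mult_le_mono[OF \<open>p \<ge> 1\<close> \<open>q \<ge> 1\<close>] by simp
  then have undo: "(f ^^ (p * q - 1)) (f a) = a" "(f ^^ (p * q - 1)) (f b) = b"
    using funpow_pred_apply[OF period(1)] funpow_pred_apply[OF period(2)] by simp_all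
  have "f a \<in> S" "f b \<in> connected_component_set S (f a)"
    using assms image_subset by auto
  then have "(f ^^ (p * q - 1)) (f b) \<in> connected_component_set S ((f ^^ (p * q - 1)) (f a))"
    using image_funpow_connected_component_subset by blast
  then have "b \<in> connected_component_set S a"
    by (simp only: undo)
  then show ?thesis
    by (simp add: connected_component_eq)
qed

lemma image_connected_component:
  assumes "y \<in> S"
  shows "f ` connected_component_set S y = connected_component_set S (f y)"
proof
  show "f ` connected_component_set S y \<subseteq> connected_component_set S (f y)"
    using image_funpow_connected_component_subset[OF assms, of 1] by simp
  show "connected_component_set S (f y) \<subseteq> f ` connected_component_set S y"
  proof
    fix z assume z: "z \<in> connected_component_set S (f y)"
    then obtain z' where "z' \<in> S" "z = f z'"
      using image_eq connected_component_subset by blast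
    then have "connected_component_set S (f z') = connected_component_set S (f y)"
      using connected_component_eq[OF z] by simp
    then have "connected_component_set S z' = connected_component_set S y"
      by (rule connected_component_eq_if_image_eq[OF \<open>z' \<in> S\<close> assms])
    then have "z' \<in> connected_component_set S y"
      using \<open>z' \<in> S\<close> by (metis connected_component_refl_eq mem_Collect_eq)
    then show "z \<in> f ` connected_component_set S y"
      using \<open>z = f z'\<close> by blast
  qed
qed

lemma image_funpow_connected_component:
  assumes "y \<in> S"
  shows "((`) f ^^ n) (connected_component_set S y) = connected_component_set S ((f ^^ n) y)"
  by (induction n) (simp_all add: image_connected_component funpow_in assms)

lemma clopenin_image:
  assumes "clopenin (top_of_set S) U"
  shows "clopenin (top_of_set S) (f ` U)"
proof -
  have closed_image: "closedin (top_of_set S) (f ` V)" if "closedin (top_of_set S) V" for V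
  proof -
    have "V \<subseteq> S" "compact V"
      using that closedin_compact[OF compact_S] closedin_imp_subset by blast+
    then have "compact (f ` V)" "f ` V \<subseteq> S"
      using compact_continuous_image continuous_on_subset[OF continuous_on_f] image_subset by blast+
    then show ?thesis
      using closed_subset compact_imp_closed by blast
  qed
  have "U \<subseteq> S"
    using clopenin_imp_subset[OF assms] by simp
  \<comment> \<open>Points in different components have different images, so \<open>f\<close> maps \<open>U\<close> and \<open>S - U\<close> apart.\<close>
  have "f ` U \<inter> f ` (S - U) = {}"
  proof (rule ccontr)
    assume "f ` U \<inter> f ` (S - U) \<noteq> {}"
    then obtain u v where "u \<in> U" "v \<in> S" "v \<notin> U" "f u = f v"
      by auto
    moreover have "u \<in> S"
      using \<open>U \<subseteq> S\<close> \<open>u \<in> U\<close> by blast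
    ultimately have "connected_component_set S u = connected_component_set S v"
      using connected_component_eq_if_image_eq[of u v] by simp
    then have "v \<in> connected_component_set S u"
      using \<open>v \<in> S\<close> by simp
    then show False
      using connected_component_subset_clopenin[OF assms \<open>u \<in> U\<close>] \<open>v \<notin> U\<close> by blast
  qed
  moreover have "f ` U \<union> f ` (S - U) = S"
    using image_eq \<open>U \<subseteq> S\<close> by (simp add: image_Un[symmetric] Un_absorb1)
  ultimately have "f ` U = S - f ` (S - U)"
    by blast
  moreover have "closedin (top_of_set S) (f ` (S - U))"
    using closed_image clopenin_diff[OF assms] unfolding clopenin_def by simp
  ultimately have "openin (top_of_set S) (f ` U)"
    by (simp add: openin_diff)
  then show ?thesis
    using closed_image assms unfolding clopenin_def by blast
qed

lemma clopenin_funpow_image: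
  assumes "clopenin (top_of_set S) U"
  shows "clopenin (top_of_set S) ((f ^^ n) ` U)"
proof (induction n)
  case (Suc n)
  then have "clopenin (top_of_set S) (f ` (f ^^ n) ` U)"
    by (rule clopenin_image)
  then show ?case
    by (simp add: image_image)
qed (simp add: assms)

lemma clopenin_funpow_preimage:
  assumes "clopenin (top_of_set S) V"
  shows "clopenin (top_of_set S) (S \<inter> (f ^^ n) -` V)"
  using assms funpow_in unfolding clopenin_def
  by (auto intro: continuous_openin_preimage continuous_closedin_preimage_gen continuous_on_funpow)

lemma funpow_image_subset_clopenin:
  assumes "clopenin (top_of_set S) U" "\<And>y. y \<in> U \<Longrightarrow> (f ^^ N) y \<in> connected_component_set S y"
  shows "(f ^^ N) ` U \<subseteq> U"
  using assms connected_component_subset_clopenin by blast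

lemma clopenin_shrink_funpow_notin_connected_component:
  assumes "clopenin (top_of_set S) U" "y \<in> U" "(f ^^ n) y \<notin> connected_component_set S y"
  shows "\<exists>U'. clopenin (top_of_set S) U' \<and> y \<in> U' \<and> U' \<subseteq> U \<and>
    (\<forall>z\<in>U'. (f ^^ n) z \<notin> connected_component_set S z)"
proof -
  have "y \<in> S"
    using clopenin_imp_subset[OF assms(1)] assms(2) by auto
  then obtain V where V: "clopenin (top_of_set S) V" "y \<in> V" "(f ^^ n) y \<notin> V"
    using clopenin_separates_components[OF compact_S _ funpow_in assms(3)] by blast
  define U' where "U' = U \<inter> V \<inter> (S \<inter> (f ^^ n) -` (S - V))"
  have "clopenin (top_of_set S) U'"
    using clopenin_diff[OF V(1)] unfolding U'_def
    by (intro clopenin_Int assms(1) V(1) clopenin_funpow_preimage) simp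
  moreover have "(f ^^ n) z \<notin> connected_component_set S z" if "z \<in> U'" for z
    using that connected_component_subset_clopenin[OF V(1)] unfolding U'_def by blast
  ultimately show ?thesis
    using assms(2) V(2,3) \<open>y \<in> S\<close> funpow_in unfolding U'_def by blast
qed

lemma exists_clopenin_funpow_in_connected_component:
  assumes "S \<noteq> {}"
  shows "\<exists>N\<ge>1. \<exists>V. clopenin (top_of_set S) V \<and> V \<noteq> {} \<and>
    (\<forall>y\<in>V. (f ^^ N) y \<in> connected_component_set S y)"
proof (rule ccontr)
  assume no: "\<not> ?thesis"
  let ?R = "\<lambda>n. {y. (f ^^ Suc n) y \<in> connected_component_set S y}"
  have "S \<subseteq> (\<Union>n. ?R n)"
  proof
    fix y assume "y \<in> S"
    then obtain p where "p \<ge> 1" "(f ^^ p) y = y"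
      using periodic by blast
    then show "y \<in> (\<Union>n. ?R n)"
      using \<open>y \<in> S\<close> by (intro UN_I[of "p - 1"]) auto
  qed
  moreover have "\<exists>U'. clopenin (top_of_set S) U' \<and> U' \<noteq> {} \<and> U' \<subseteq> U \<and> U' \<inter> ?R n = {}"
    if "clopenin (top_of_set S) U" "U \<noteq> {}" for n U
  proof -
    have "\<not> (\<forall>y\<in>U. (f ^^ Suc n) y \<in> connected_component_set S y)"
    proof
      assume "\<forall>y\<in>U. (f ^^ Suc n) y \<in> connected_component_set S y"
      then have "\<exists>N\<ge>1. \<exists>V. clopenin (top_of_set S) V \<and> V \<noteq> {} \<and>
          (\<forall>y\<in>V. (f ^^ N) y \<in> connected_component_set S y)"
        using that by (intro exI[of _ "Suc n"] conjI exI[of _ U]) auto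
      then show False
        by (rule notE[OF no])
    qed
    then obtain y where "y \<in> U" "(f ^^ Suc n) y \<notin> connected_component_set S y"
      by blast
    then show ?thesis
      using clopenin_shrink_funpow_notin_connected_component[OF that(1)] by blast
  qed
  ultimately have "S = {}"
    by (rule compact_clopenin_Baire[OF compact_S])
  with assms show False
    by contradiction
qed

end

locale clopen_minimal_periodic_system = periodic_compact_system +
  assumes nonempty: "S \<noteq> {}"
    and clopen_minimal: "\<And>A. clopenin (top_of_set S) A \<Longrightarrow> A \<noteq> {} \<Longrightarrow> f ` A \<subseteq> A \<Longrightarrow> A = S"
begin

lemma UN_funpow_image_clopenin:
  assumes "clopenin (top_of_set S) U" "U \<noteq> {}" "N \<ge> 1" "(f ^^ N) ` U \<subseteq> U"
  shows "(\<Union>i<N. (f ^^ i) ` U) = S"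
proof (rule clopen_minimal)
  show "clopenin (top_of_set S) (\<Union>i<N. (f ^^ i) ` U)"
    by (intro clopenin_UN clopenin_funpow_image[OF assms(1)]) simp
  have "(f ^^ 0) ` U \<subseteq> (\<Union>i<N. (f ^^ i) ` U)"
    using assms(3) by (intro UN_upper) simp
  then show "(\<Union>i<N. (f ^^ i) ` U) \<noteq> {}"
    using assms(2) by auto
  show "f ` (\<Union>i<N. (f ^^ i) ` U) \<subseteq> (\<Union>i<N. (f ^^ i) ` U)"
  proof
    fix z assume "z \<in> f ` (\<Union>i<N. (f ^^ i) ` U)"
    then obtain i u where "i < N" "u \<in> U" "z = (f ^^ Suc i) u"
      by auto
    show "z \<in> (\<Union>i<N. (f ^^ i) ` U)"
    proof (cases "Suc i < N")
      case True
      then show ?thesis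
        using \<open>u \<in> U\<close> \<open>z = (f ^^ Suc i) u\<close> by blast
    next
      case False
      then have "N = Suc i"
        using \<open>i < N\<close> by simp
      then have "z = (f ^^ N) u"
        using \<open>z = (f ^^ Suc i) u\<close> by simp
      then have "z \<in> (f ^^ 0) ` U"
        using assms(4) \<open>u \<in> U\<close> by auto
      then show ?thesis
        using assms(3) by (intro UN_I[of 0]) auto
    qed
  qed
qed

lemma exists_funpow_in_connected_component:
  "\<exists>N\<ge>1. \<forall>y\<in>S. (f ^^ N) y \<in> connected_component_set S y"
proof -
  obtain N V where NV: "N \<ge> 1" "clopenin (top_of_set S) V" "V \<noteq> {}"
    and return: "\<And>v. v \<in> V \<Longrightarrow> (f ^^ N) v \<in> connected_component_set S v"
    using exists_clopenin_funpow_in_connected_component[OF nonempty] by blast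
  have "(f ^^ N) y \<in> connected_component_set S y" if "y \<in> S" for y
  proof -
    obtain i v where "v \<in> V" "y = (f ^^ i) v"
      using UN_funpow_image_clopenin[OF NV(2,3,1) funpow_image_subset_clopenin[OF NV(2) return]]
        \<open>y \<in> S\<close> by blast
    moreover have "v \<in> S"
      using clopenin_imp_subset[OF NV(2)] \<open>v \<in> V\<close> by auto
    moreover have "(f ^^ N) y = (f ^^ i) ((f ^^ N) v)"
      using \<open>y = (f ^^ i) v\<close> by (metis add.commute comp_apply funpow_add)
    ultimately show ?thesis
      using image_funpow_connected_component_subset[of v i] return[of v] by blast
  qed
  then show ?thesis
    using NV(1) by blast
qed

lemma in_connected_component_funpow:
  assumes "N \<ge> 1" "\<And>y. y \<in> S \<Longrightarrow> (f ^^ N) y \<in> connected_component_set S y"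
    and "y0 \<in> S" "w \<in> S"
  shows "\<exists>i<N. w \<in> connected_component_set S ((f ^^ i) y0)"
proof (rule ccontr)
  assume "\<not> ?thesis"
  then have "\<exists>V. clopenin (top_of_set S) V \<and> (f ^^ i) y0 \<in> V \<and> w \<notin> V" if "i < N" for i
    using that clopenin_separates_components[OF compact_S funpow_in[OF assms(3)] assms(4)] by blast
  then obtain V where V: "\<And>i. i < N \<Longrightarrow> clopenin (top_of_set S) (V i) \<and> (f ^^ i) y0 \<in> V i \<and> w \<notin> V i"
    by metis
  \<comment> \<open>\<open>U\<close> is a clopen neighbourhood of \<open>y0\<close> whose first \<open>N\<close> images all miss \<open>w\<close>,
    yet by minimality these images cover \<open>S\<close>\<close>
  define U where "U = (\<Inter>i<N. S \<inter> (f ^^ i) -` V i)"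
  have "clopenin (top_of_set S) U"
    unfolding U_def using V assms(1)
    by (intro clopenin_INT clopenin_funpow_preimage) (auto simp: lessThan_empty_iff)
  moreover have "y0 \<in> U"
    using V assms(3) unfolding U_def by blast
  moreover have "(f ^^ N) ` U \<subseteq> U"
    using funpow_image_subset_clopenin[OF \<open>clopenin _ U\<close> assms(2)] U_def by blast
  ultimately obtain i u where "i < N" "u \<in> U" "w = (f ^^ i) u"
    using UN_funpow_image_clopenin[OF _ _ assms(1)] assms(4) by blast
  then show False
    using V unfolding U_def by blast
qed

lemma cyclic_components:
  "finite (components S) \<and>
   (\<exists>k::nat. \<exists>C::nat \<Rightarrow> 'a set. k \<ge> 1 \<and>
      inj_on C {..<k} \<and> C ` {..<k} = components S \<and>
      (\<forall>i<k. f ` C i = C (Suc i mod k)))"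
proof -
  obtain N where N: "N \<ge> 1" "\<And>y. y \<in> S \<Longrightarrow> (f ^^ N) y \<in> connected_component_set S y"
    using exists_funpow_in_connected_component by blast
  obtain y0 where "y0 \<in> S"
    using nonempty by blast
  \<comment> \<open>\<open>C\<close> is the orbit of the component of \<open>y0\<close> under the induced map \<open>D \<mapsto> f ` D\<close>;
    \<open>funpow_dist1\<close> gives its least period \<open>k\<close>\<close>
  define C where "C i = ((`) f ^^ i) (connected_component_set S y0)" for i
  have C_eq: "C i = connected_component_set S ((f ^^ i) y0)" for i
    unfolding C_def by (rule image_funpow_connected_component[OF \<open>y0 \<in> S\<close>])
  have "C N = C 0"
    using C_eq N \<open>y0 \<in> S\<close> connected_component_eq by force
  then have orbit: "C 0 \<in> orbit ((`) f) (C 0)"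
    using N(1) unfolding C_def orbit_altdef by force
  define k where "k = funpow_dist1 ((`) f) (C 0) (C 0)"
  have period: "C i = C (i mod k)" for i
    using funpow_dist1_prop[OF orbit] unfolding C_def k_def by (simp add: funpow_mod_eq)
  have "inj_on C {..<k}"
    using inj_on_funpow_dist1[OF orbit] unfolding C_def k_def by (simp add: atLeast0LessThan)
  moreover have "C ` {..<k} = components S"
  proof
    show "C ` {..<k} \<subseteq> components S"
      using funpow_in[OF \<open>y0 \<in> S\<close>] by (auto simp: C_eq intro: componentsI)
    show "components S \<subseteq> C ` {..<k}"
    proof
      fix D assume "D \<in> components S"
      then obtain w where "w \<in> S" "D = connected_component_set S w"
        by (auto simp: components_iff)
      then obtain i where "D = C i"
        using in_connected_component_funpow[OF N \<open>y0 \<in> S\<close>] C_eq connected_component_eq by metis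
      then show "D \<in> C ` {..<k}"
        using period[of i] k_def by auto
    qed
  qed
  moreover have "f ` C i = C (Suc i mod k)" for i
    using period[of "Suc i"] unfolding C_def by simp
  moreover have "k \<ge> 1"
    unfolding k_def by simp
  ultimately show ?thesis
    by (metis finite_imageI finite_lessThan)
qed

end

theorem theorem1p1:
  fixes X :: "'a::metric_space set" and f :: "'a \<Rightarrow> 'a" and x :: 'a
  assumes "compact X" and "continuous_on X f" and "f ` X \<subseteq> X" and "x \<in> X"
    and "omega_limit f x \<subseteq> periodic_points X f"
  shows "finite (components (omega_limit f x)) \<and>
         (\<exists>k::nat. \<exists>C::nat \<Rightarrow> 'a set. k \<ge> 1 \<and>
            inj_on C {..<k} \<and> C ` {..<k} = components (omega_limit f x) \<and>
            (\<forall>i<k. f ` C i = C (Suc i mod k)))"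
proof -
  have "omega_limit f x \<subseteq> X"
    using assms(1,3,4) omega_limit_subset compact_imp_closed by blast
  interpret clopen_minimal_periodic_system "omega_limit f x" f
  proof
    show "compact (omega_limit f x)"
      using compact_omega_limit assms(1,3,4) .
    show "continuous_on (omega_limit f x) f"
      using continuous_on_subset[OF assms(2) \<open>omega_limit f x \<subseteq> X\<close>] .
    show "f ` omega_limit f x \<subseteq> omega_limit f x"
      using image_omega_limit_subset assms(1-4) compact_imp_closed by blast
    show "\<exists>n\<ge>1. (f ^^ n) y = y" if "y \<in> omega_limit f x" for y
      using that assms(5) unfolding periodic_points_def by blast
    show "omega_limit f x \<noteq> {}"
      using omega_limit_nonempty assms(1,3,4) .
    show "A = omega_limit f x"
      if "clopenin (top_of_set (omega_limit f x)) A" "A \<noteq> {}" "f ` A \<subseteq> A" for A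
      using invariant_clopenin_omega_limit_eq[OF assms(1-4) that] .
  qed
  show ?thesis
    by (rule cyclic_components)
qed

end
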